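(* Let $\Sigma=(X,U,F)$ be a system and $Q\subset X$ a controlled invariant set. If $K\subset Q$ (nonempty) and $m\in\mathbb{N}$, then \[h_{inv}(K,Q)=\limsup_{n\to\infty}\frac{1}{nm}\log r_{inv}(nm,K,Q).\]
   Context: A system is a triple $\Sigma=(X,U,F)$ where $X,U$ are nonempty sets and $F:X\times U\rightrightarrows X$ is a set-valued map with $F(x,u)\neq\emptyset$ for all $(x,u)$. For $A\subset X$ and $u\in U$, $F(A,u)=\bigcup_{x\in A}F(x,u)$. A set $Q\subset X$ is controlled invariant if for every $x\in Q$ there is $u\in U$ with $F(x,u)\subset Q$. For $u\in U$ put $Q_u=\{x\in Q: F(x,u)\subset Q\}$. Elements of $U^n$ are written $\omega=\omega_0\omega_1\cdots\omega_{n-1}$, and $\omega_{[0,i]}=\omega_0\cdots\omega_i$. A set $S\subset U^n$ is an admissible family of length $n$ for $Q$ if (a) $\omega'_0=\omega''_0$ for all $\omega',\omega''\in S$, and (b) there exists $x\in Q$ such that for every $\omega\in S$, with $I^0_\omega(x)=\{x\}$: for all $i=0,1,\dots,n-2$, $F(I^i_\omega(x),\omega_i)\subset\bigcup_{\omega'\in S,\ \omega'_{[0,i]}=\omega_{[0,i]}}Q_{\omega'_{i+1}}$ and $I^{i+1}_\omega(x):=F(I^i_\omega(x),\omega_i)\cap Q_{\omega_{i+1}}\neq\emptyset$; and $I^n_\omega(x):=F(I^{n-1}_\omega(x),\omega_{n-1})\subset Q$. Let $AF^n(Q)$ be the set of admissible families of length $n$ for $Q$, and for $S\in AF^n(Q)$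 let $Q_S$ be the set of all $x\in Q$ satisfying (b). For nonempty $K\subset Q$, a set $\mathscr{S}\subset U^n$ is $(n,K,Q)$-spanning if $K\subset\bigcup_{S\subset\mathscr{S},\,S\in AF^n(Q)}Q_S$. Let $r_{inv}(n,K,Q)=\inf\{\sharp\mathscr{S}:\mathscr{S}\text{ is }(n,K,Q)\text{-spanning}\}$ (with $\inf\emptyset=\infty$), and the invariance entropy $h_{inv}(K,Q)=\limsup_{n\to\infty}\frac1n\log r_{inv}(n,K,Q)$, where $\log$ is base $2$. *)

theory Defs
  imports Complex_Main "HOL-Library.Extended_Real" "HOL-Library.Liminf_Limsup"
begin

definition is_system :: "'x set \<Rightarrow> 'u set \<Rightarrow> ('x \<Rightarrow> 'u \<Rightarrow> 'x set) \<Rightarrow> bool" where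
  "is_system X U F \<longleftrightarrow> X \<noteq> {} \<and> U \<noteq> {} \<and>
     (\<forall>x\<in>X. \<forall>u\<in>U. F x u \<noteq> {} \<and> F x u \<subseteq> X)"

definition controlled_invariant :: "'u set \<Rightarrow> ('x \<Rightarrow> 'u \<Rightarrow> 'x set) \<Rightarrow> 'x set \<Rightarrow> bool" where
  "controlled_invariant U F Q \<longleftrightarrow> (\<forall>x\<in>Q. \<exists>u\<in>U. F x u \<subseteq> Q)"

definition Fimg :: "('x \<Rightarrow> 'u \<Rightarrow> 'x set) \<Rightarrow> 'x set \<Rightarrow> 'u \<Rightarrow> 'x set" where
  "Fimg F A u = (\<Union>x\<in>A. F x u)"

definition Qu :: "('x \<Rightarrow> 'u \<Rightarrow> 'x set) \<Rightarrow> 'x set \<Rightarrow> 'u \<Rightarrow> 'x set" where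
  "Qu F Q u = {x\<in>Q. F x u \<subseteq> Q}"

definition words :: "'u set \<Rightarrow> nat \<Rightarrow> 'u list set" where
  "words U n = {w. length w = n \<and> set w \<subseteq> U}"

primrec Iset :: "('x \<Rightarrow> 'u \<Rightarrow> 'x set) \<Rightarrow> 'x set \<Rightarrow> 'u list \<Rightarrow> 'x \<Rightarrow> nat \<Rightarrow> 'x set" where
  "Iset F Q w x 0 = {x}"
| "Iset F Q w x (Suc i) =
     (if Suc i < length w then Fimg F (Iset F Q w x i) (w ! i) \<inter> Qu F Q (w ! Suc i)
      else Fimg F (Iset F Q w x i) (w ! i))"

definition adm_point :: "('x \<Rightarrow> 'u \<Rightarrow> 'x set) \<Rightarrow> 'x set \<Rightarrow> nat \<Rightarrow> 'u list set \<Rightarrow> 'x \<Rightarrow> bool" where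
  "adm_point F Q n S x \<longleftrightarrow> x \<in> Q \<and>
     (\<forall>w\<in>S.
        (\<forall>i. i + 1 < n \<longrightarrow>
            Fimg F (Iset F Q w x i) (w ! i)
              \<subseteq> (\<Union>w'\<in>{w'\<in>S. take (Suc i) w' = take (Suc i) w}. Qu F Q (w' ! Suc i))
          \<and> Iset F Q w x (Suc i) \<noteq> {})
        \<and> Iset F Q w x n \<subseteq> Q)"

definition AF :: "('x \<Rightarrow> 'u \<Rightarrow> 'x set) \<Rightarrow> 'u set \<Rightarrow> 'x set \<Rightarrow> nat \<Rightarrow> 'u list set set" where
  "AF F U Q n = {S. S \<subseteq> words U n \<and> S \<noteq> {} \<and>
      (\<forall>w'\<in>S. \<forall>w''\<in>S. w' ! 0 = w'' ! 0) \<and> (\<exists>x. adm_point F Q n S x)}"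

definition QS :: "('x \<Rightarrow> 'u \<Rightarrow> 'x set) \<Rightarrow> 'x set \<Rightarrow> nat \<Rightarrow> 'u list set \<Rightarrow> 'x set" where
  "QS F Q n S = {x. adm_point F Q n S x}"

definition spanning :: "('x \<Rightarrow> 'u \<Rightarrow> 'x set) \<Rightarrow> 'u set \<Rightarrow> 'x set \<Rightarrow> nat \<Rightarrow> 'x set \<Rightarrow> 'u list set \<Rightarrow> bool" where
  "spanning F U Q n K SS \<longleftrightarrow> SS \<subseteq> words U n \<and>
     K \<subseteq> (\<Union>S\<in>{S. S \<subseteq> SS \<and> S \<in> AF F U Q n}. QS F Q n S)"

text \<open>r_inv(n,K,Q) as an extended real (infinite spanning sets have cardinality \<infinity>; Inf {} = \<infinity>).\<close>
definition r_inv :: "('x \<Rightarrow> 'u \<Rightarrow> 'x set) \<Rightarrow> 'u set \<Rightarrow> 'x set \<Rightarrow> nat \<Rightarrow> 'x set \<Rightarrow> ereal" where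
  "r_inv F U Q n K = Inf {ereal (real (card SS)) | SS. finite SS \<and> spanning F U Q n K SS}"

definition elog2 :: "ereal \<Rightarrow> ereal" where
  "elog2 r = (if r = \<infinity> then \<infinity> else if r > 0 then ereal (log 2 (real_of_ereal r)) else -\<infinity>)"

definition h_inv :: "('x \<Rightarrow> 'u \<Rightarrow> 'x set) \<Rightarrow> 'u set \<Rightarrow> 'x set \<Rightarrow> 'x set \<Rightarrow> ereal" where
  "h_inv F U Q K = limsup (\<lambda>n. ereal (1 / real n) * elog2 (r_inv F U Q n K))"

end

theory Submission
  imports Defs "HOL-Analysis.Extended_Real_Limits"
begin

(* Cutting every word of an admissible family of length n + 1 down to its first n letters
   gives an admissible family of length n that works for the same initial points, so
   r_inv(n, K, Q) is nondecreasing in n.  For a nondecreasing a and nm <= k <= (n + 1)m one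
   then has a(k)/k <= ((n + 1)/n) * a((n + 1)m)/((n + 1)m), and since (n + 1)/n -> 1 the
   limsup over all k is already attained along the multiples of m. *)

lemma Iset_take:
  assumes "i < n"
  shows "Iset F Q (take n w) x i = Iset F Q w x i"
  using assms by (induction i) (simp_all add: nth_take)

lemma Iset_take_Suc_last:
  assumes "j < length w"
  shows "Iset F Q (take (Suc j) w) x (Suc j) = Fimg F (Iset F Q w x j) (w ! j)"
  using assms by (simp add: Iset_take)

lemma take_in_words:
  assumes "w \<in> words U n"
  shows "take k w \<in> words U (min k n)"
  using assms set_take_subset[of k w] by (auto simp: words_def)

lemma adm_point_take:
  assumes S: "S \<subseteq> words U (Suc n)" and adm: "adm_point F Q (Suc n) S x"
  shows "adm_point F Q n (take n ` S) x"
  unfolding adm_point_def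
proof (intro conjI ballI allI impI)
  show "x \<in> Q"
    using adm by (simp add: adm_point_def)
next
  fix w i
  assume "w \<in> take n ` S" and i: "i + 1 < n"
  then obtain v where v: "v \<in> S" "w = take n v"
    by blast
  have step: "Fimg F (Iset F Q v x i) (v ! i)
      \<subseteq> (\<Union>v'\<in>{v'\<in>S. take (Suc i) v' = take (Suc i) v}. Qu F Q (v' ! Suc i))"
    "Iset F Q v x (Suc i) \<noteq> {}"
    using adm v i by (auto simp: adm_point_def)
  have "(\<Union>v'\<in>{v'\<in>S. take (Suc i) v' = take (Suc i) v}. Qu F Q (v' ! Suc i))
      \<subseteq> (\<Union>w'\<in>{w'\<in>take n ` S. take (Suc i) w' = take (Suc i) w}. Qu F Q (w' ! Suc i))"
  proof
    fix y
    assume "y \<in> (\<Union>v'\<in>{v'\<in>S. take (Suc i) v' = take (Suc i) v}. Qu F Q (v' ! Suc i))"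
    then obtain v' where v': "v' \<in> S" "take (Suc i) v' = take (Suc i) v" "y \<in> Qu F Q (v' ! Suc i)"
      by blast
    have "take n v' \<in> take n ` S" "take (Suc i) (take n v') = take (Suc i) w"
      "take n v' ! Suc i = v' ! Suc i"
      using v v' i by (simp_all add: min_absorb1)
    with v' show "y \<in> (\<Union>w'\<in>{w'\<in>take n ` S. take (Suc i) w' = take (Suc i) w}. Qu F Q (w' ! Suc i))"
      by force
  qed
  moreover have "Iset F Q w x i = Iset F Q v x i" "Iset F Q w x (Suc i) = Iset F Q v x (Suc i)"
    "w ! i = v ! i"
    using i v by (simp_all only: Iset_take nth_take Suc_eq_plus1 less_imp_le)
  ultimately show "Fimg F (Iset F Q w x i) (w ! i)
      \<subseteq> (\<Union>w'\<in>{w'\<in>take n ` S. take (Suc i) w' = take (Suc i) w}. Qu F Q (w' ! Suc i))"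
    "Iset F Q w x (Suc i) \<noteq> {}"
    using step by auto
next
  fix w
  assume "w \<in> take n ` S"
  then obtain v where v: "v \<in> S" "w = take n v"
    by blast
  show "Iset F Q w x n \<subseteq> Q"
  proof (cases n)
    case 0
    then show ?thesis
      using adm by (simp add: adm_point_def)
  next
    case (Suc j)
    have "j < length v"
      using S v Suc by (auto simp: words_def)
    then have "Iset F Q w x n = Fimg F (Iset F Q v x j) (v ! j)"
      using v Suc by (simp only: Iset_take_Suc_last)
    also have "Fimg F (Iset F Q v x j) (v ! j)
        \<subseteq> (\<Union>v'\<in>{v'\<in>S. take (Suc j) v' = take (Suc j) v}. Qu F Q (v' ! Suc j))"
      using adm v Suc by (auto simp: adm_point_def)
    also have "\<dots> \<subseteq> Q"
      by (auto simp: Qu_def)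
    finally show ?thesis .
  qed
qed

lemma AF_take:
  assumes "S \<in> AF F U Q (Suc n)"
  shows "take n ` S \<in> AF F U Q n"
proof -
  have S: "S \<subseteq> words U (Suc n)" "S \<noteq> {}" "\<forall>v\<in>S. \<forall>v'\<in>S. v ! 0 = v' ! 0"
    and "\<exists>x. adm_point F Q (Suc n) S x"
    using assms unfolding AF_def by blast+
  then obtain x where "adm_point F Q (Suc n) S x"
    by blast
  then have "adm_point F Q n (take n ` S) x"
    using S(1) by (rule adm_point_take[rotated])
  moreover have "take n ` S \<subseteq> words U n"
    using S(1) take_in_words[of _ U "Suc n" n] by auto
  moreover have "\<forall>w\<in>take n ` S. \<forall>w'\<in>take n ` S. w ! 0 = w' ! 0"
  proof (intro ballI)
    fix w w'
    assume "w \<in> take n ` S" "w' \<in> take n ` S"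
    then obtain v v' where "v \<in> S" "w = take n v" "v' \<in> S" "w' = take n v'"
      by blast
    moreover have "v ! 0 = v' ! 0"
      using S(3) \<open>v \<in> S\<close> \<open>v' \<in> S\<close> by blast
    ultimately show "w ! 0 = w' ! 0"
      by (cases n) simp_all
  qed
  ultimately show ?thesis
    using S(2) unfolding AF_def by blast
qed

lemma QS_take:
  assumes "S \<subseteq> words U (Suc n)"
  shows "QS F Q (Suc n) S \<subseteq> QS F Q n (take n ` S)"
  using adm_point_take[OF assms] by (auto simp: QS_def)

lemma spanning_take:
  assumes "spanning F U Q (Suc n) K SS"
  shows "spanning F U Q n K (take n ` SS)"
  unfolding spanning_def
proof (intro conjI subsetI)
  show "w \<in> words U n" if "w \<in> take n ` SS" for w
    using that assms take_in_words[of _ U "Suc n" n] by (auto simp: spanning_def)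
next
  fix k
  assume "k \<in> K"
  then obtain S where S: "S \<subseteq> SS" "S \<in> AF F U Q (Suc n)" "k \<in> QS F Q (Suc n) S"
    using assms by (auto simp: spanning_def)
  then have "k \<in> QS F Q n (take n ` S)"
    using QS_take[of S U n F Q] by (auto simp: AF_def)
  moreover have "take n ` S \<subseteq> take n ` SS" "take n ` S \<in> AF F U Q n"
    using S by (auto intro: AF_take)
  ultimately show "k \<in> (\<Union>S\<in>{S. S \<subseteq> take n ` SS \<and> S \<in> AF F U Q n}. QS F Q n S)"
    by blast
qed

lemma incseq_r_inv: "incseq (\<lambda>n. r_inv F U Q n K)"
proof (rule incseq_SucI)
  fix n
  show "r_inv F U Q n K \<le> r_inv F U Q (Suc n) K"
    unfolding r_inv_def
  proof (rule Inf_mono)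
    fix b
    assume "b \<in> {ereal (real (card SS)) | SS. finite SS \<and> spanning F U Q (Suc n) K SS}"
    then obtain SS where SS: "b = ereal (real (card SS))" "finite SS" "spanning F U Q (Suc n) K SS"
      by blast
    then show "\<exists>a\<in>{ereal (real (card SS)) | SS. finite SS \<and> spanning F U Q n K SS}. a \<le> b"
      by (intro bexI[of _ "ereal (real (card (take n ` SS)))"])
        (auto simp: card_image_le spanning_take)
  qed
qed

lemma one_le_r_inv:
  assumes "K \<noteq> {}"
  shows "1 \<le> r_inv F U Q n K"
  unfolding r_inv_def
proof (rule Inf_greatest)
  fix b
  assume "b \<in> {ereal (real (card SS)) | SS. finite SS \<and> spanning F U Q n K SS}"
  then obtain SS where SS: "b = ereal (real (card SS))" "finite SS" "spanning F U Q n K SS"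
    by blast
  obtain k where "k \<in> K"
    using assms by blast
  then obtain S where "S \<subseteq> SS" "S \<in> AF F U Q n"
    using SS(3) by (auto simp: spanning_def)
  then have "SS \<noteq> {}"
    by (auto simp: AF_def)
  with SS show "1 \<le> b"
    by (simp add: Suc_le_eq card_gt_0_iff)
qed

lemma Limsup_filter_mono:
  fixes f :: "'a \<Rightarrow> 'b :: complete_lattice"
  assumes "F \<le> G"
  shows "Limsup F f \<le> Limsup G f"
  unfolding Limsup_def
  using assms by (auto intro!: INF_superset_mono simp: le_filter_def)

lemma limsup_compose_filterlim_le:
  fixes u :: "nat \<Rightarrow> 'a :: complete_lattice"
  assumes "filterlim r sequentially sequentially"
  shows "limsup (\<lambda>n. u (r n)) \<le> limsup u"
  using order_trans[OF Limsup_filtermap_ge Limsup_filter_mono] assms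
  unfolding filterlim_def by blast

lemma mono_elog2: "mono elog2"
proof (rule monoI)
  fix r s :: ereal
  assume "r \<le> s"
  then show "elog2 r \<le> elog2 s"
    unfolding elog2_def by (cases r; cases s) auto
qed

lemma elog2_nonneg: "1 \<le> r \<Longrightarrow> 0 \<le> elog2 r"
  unfolding elog2_def by (cases r) auto

lemma limsup_along_multiples:
  fixes a :: "nat \<Rightarrow> ereal" and m :: nat
  assumes mono: "incseq a" and nonneg: "\<And>n. 0 \<le> a n" and "0 < m"
  shows "limsup (\<lambda>n. ereal (1 / real n) * a n)
       = limsup (\<lambda>n. ereal (1 / real (n * m)) * a (n * m))"
    (is "limsup ?f = limsup ?g")
proof (rule antisym)
  have "strict_mono (\<lambda>n. n * m)"
    using \<open>0 < m\<close> by (simp add: strict_mono_def)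
  from limsup_subseq_mono[OF this, of ?f] show "limsup ?g \<le> limsup ?f"
    by (simp add: comp_def)
next
  define h where "h n = ereal (real (Suc n) / real n) * ?g (Suc n)" for n
  have f_le_h: "?f k \<le> h (k div m)" if "m \<le> k" for k
  proof -
    define n where "n = k div m"
    have "1 \<le> n"
      using div_le_mono[OF that, of m] \<open>0 < m\<close> by (simp add: n_def)
    have "n * m \<le> k"
      by (simp add: n_def div_times_less_eq_dividend)
    have "k \<le> Suc n * m"
      using mod_less_divisor[OF \<open>0 < m\<close>, of k] div_mult_mod_eq[of k m]
      unfolding n_def mult_Suc by linarith
    have "0 < real (n * m)"
      using \<open>1 \<le> n\<close> \<open>0 < m\<close> by simp
    moreover have "real (n * m) \<le> real k"
      using \<open>n * m \<le> k\<close> by (simp only: of_nat_le_iff)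
    ultimately have "1 / real k \<le> 1 / real (n * m)"
      by (rule frac_le[rotated 2]) simp_all
    have "?f k \<le> ereal (1 / real (n * m)) * a (Suc n * m)"
    proof (rule ereal_mult_mono)
      show "ereal (1 / real k) \<le> ereal (1 / real (n * m))"
        using \<open>1 / real k \<le> 1 / real (n * m)\<close> by simp
      show "a k \<le> a (Suc n * m)"
        using mono \<open>k \<le> Suc n * m\<close> by (rule incseqD)
    qed (simp_all add: nonneg)
    also have "\<dots> = h n"
    proof -
      have cancel: "c / d * (1 / (c * e)) = 1 / (d * e)" if "c \<noteq> 0" for c d e :: real
        using that by simp
      have "real (Suc n) / real n * (1 / real (Suc n * m)) = 1 / real (n * m)"
        unfolding of_nat_mult by (rule cancel) simp
      then show ?thesis
        unfolding h_def by (simp only: mult.assoc[symmetric] times_ereal.simps)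
    qed
    finally show ?thesis
      by (simp add: n_def)
  qed
  have "limsup ?f \<le> limsup (\<lambda>k. h (k div m))"
    by (rule Limsup_mono) (auto simp: eventually_sequentially intro: f_le_h)
  also have "\<dots> \<le> limsup h"
    using filterlim_at_top_div_const_nat[OF \<open>0 < m\<close>] by (rule limsup_compose_filterlim_le)
  also have "limsup h = limsup (\<lambda>n. ?g (Suc n))"
  proof -
    have "(\<lambda>n. ereal (real (Suc n) / real n)) \<longlonglongrightarrow> ereal 1"
      using LIMSEQ_Suc_n_over_n by (rule tendsto_ereal)
    then have "limsup h = ereal 1 * limsup (\<lambda>n. ?g (Suc n))"
      unfolding h_def by (rule ereal_limsup_lim_mult) simp_all
    then show ?thesis
      by simp
  qed
  also have "\<dots> = limsup ?g"
    using limsup_shift[of ?g] by simp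
  finally show "limsup ?f \<le> limsup ?g" .
qed

theorem proposition2p6:
  fixes X :: "'x set" and U :: "'u set" and F :: "'x \<Rightarrow> 'u \<Rightarrow> 'x set"
    and Q K :: "'x set" and m :: nat
  assumes "is_system X U F"
    and "Q \<subseteq> X"
    and "controlled_invariant U F Q"
    and "K \<subseteq> Q" and "K \<noteq> {}"
    and "m \<ge> 1"
  shows "h_inv F U Q K =
    limsup (\<lambda>n. ereal (1 / real (n * m)) * elog2 (r_inv F U Q (n * m) K))"
  unfolding h_inv_def
proof (rule limsup_along_multiples)
  show "incseq (\<lambda>n. elog2 (r_inv F U Q n K))"
    by (intro monoI monoD[OF mono_elog2] monoD[OF incseq_r_inv])
  show "0 \<le> elog2 (r_inv F U Q n K)" for n
    using one_le_r_inv[OF \<open>K \<noteq> {}\<close>] by (rule elog2_nonneg)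
  show "0 < m"
    using \<open>m \<ge> 1\<close> by simp
qed

end
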